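(* Suppose the $L$-smoothness assumption holds and let $\{w_t\}$, $\{v_t\}$, $\{\hat D_t\}$ be generated by {\tt Scaled SARAH} with probability $p\in(0,1]$. Then for every $t\ge0$, $$\mathbb{E}\left[\|v_{t+1}-\nabla P(w_{t+1})\|^2\right]\le(1-p)\,\mathbb{E}\left[\|v_t-\nabla P(w_t)\|^2\right]+\frac{(1-p)L^2}{\alpha}\mathbb{E}\left[\|w_{t+1}-w_t\|^2_{\hat D_t}\right].$$
   Context: $P=\frac1n\sum_{i=1}^nf_i$ with $f_i:\mathbb{R}^d\to\mathbb{R}$. $L$-smoothness assumption: each $f_i$ and $P$ are twice differentiable with $L$-Lipschitz gradients. $\|x\|_D^2=x^TDx$. For $J\subseteq[n]$, $\nabla^2P_J(w)=\frac1{|J|}\sum_{j\in J}\nabla^2 f_j(w)$; $\odot$ is the Hadamard product; $\mathrm{diag}(x)$ is the diagonal matrix with the entries of $x$. Preconditioner (parameters $\alpha>0$, $\beta\in(0,1)$, $m\ge1$): $D_0=\frac1m\sum_{j=1}^m\mathrm{diag}(z_j\odot\nabla^2P_{\mathcal{J}_j}(w_0)z_j)$, $D_t=\beta D_{t-1}+(1-\beta)\mathrm{diag}(z_t\odot\nabla^2P_{\mathcal{J}_t}(w_t)z_t)$ for $t\ge1$, with independent Rademacher vectors $z$ and random index sets $\mathcal{J}\subseteq[n]$, independent of the gradient samples; $\hat D_t$ diagonal with $(\hat D_t)_{ii}=\max\{\alpha,|(D_t)_{ii}|\}$. {\tt Scaled SARAH} (input $w_0$, step-size $\eta>0$, $p$):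 $v_0=\nabla P(w_0)$; for $t\ge0$: $w_{t+1}=w_t-\eta\hat D_t^{-1}v_t$; draw $i_{t+1}$ uniformly from $[n]$, independently of everything else; with probability $p$ (independent coin), $v_{t+1}=\nabla P(w_{t+1})$, otherwise $v_{t+1}=v_t+\nabla f_{i_{t+1}}(w_{t+1})-\nabla f_{i_{t+1}}(w_t)$; update $\hat D_{t+1}$. *)

theory Defs
  imports "HOL-Probability.Probability"
begin

text \<open>Scaled SARAH, modelled as a Markov chain of states (w_t, v_t, D_t) with
  finitely supported distributions. Vectors live in real^'d; the diagonal
  matrices D_t, hat D_t are represented by their diagonal vectors.
  Indices of the component functions are 0..n-1.\<close>

definition rademacher :: "(real^'d) pmf" where
  "rademacher = pmf_of_set {z. \<forall>i. z $ i = 1 \<or> z $ i = -1}"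

text \<open>Gradient of P = (1/n) sum f_i, given gradients g i of f i.\<close>
definition gradP :: "nat \<Rightarrow> (nat \<Rightarrow> real^'d \<Rightarrow> real^'d) \<Rightarrow> real^'d \<Rightarrow> real^'d" where
  "gradP n g w = (1 / real n) *\<^sub>R (\<Sum>i<n. g i w)"

text \<open>Diagonal of diag(z o (Hess P_J(w)) z), given Hessians H j of f j.\<close>
definition hds :: "(nat \<Rightarrow> real^'d \<Rightarrow> real^'d^'d) \<Rightarrow> real^'d \<Rightarrow> real^'d \<Rightarrow> nat set \<Rightarrow> real^'d" where
  "hds H w z J = (\<chi> k. z $ k * ((((1 / real (card J)) *\<^sub>R (\<Sum>j\<in>J. H j w)) *v z) $ k))"

definition dhat :: "real \<Rightarrow> real^'d \<Rightarrow> real^'d" where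
  "dhat \<alpha> D = (\<chi> i. max \<alpha> \<bar>D $ i\<bar>)"

definition sarah_w :: "real \<Rightarrow> real \<Rightarrow> real^'d \<Rightarrow> real^'d \<Rightarrow> real^'d \<Rightarrow> real^'d" where
  "sarah_w \<eta> \<alpha> w v D = w - \<eta> *\<^sub>R (\<chi> i. v $ i / dhat \<alpha> D $ i)"

definition dnorm2 :: "real^'d \<Rightarrow> real^'d \<Rightarrow> real" where
  "dnorm2 d x = (\<Sum>i\<in>UNIV. d $ i * (x $ i)^2)"

primrec d0_sum :: "(nat \<Rightarrow> real^'d \<Rightarrow> real^'d^'d) \<Rightarrow> nat set pmf \<Rightarrow> real^'d \<Rightarrow> nat \<Rightarrow> (real^'d) pmf" where
  "d0_sum H Jd w 0 = return_pmf 0"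
| "d0_sum H Jd w (Suc k) =
     bind_pmf (d0_sum H Jd w k) (\<lambda>s. bind_pmf rademacher (\<lambda>z. bind_pmf Jd (\<lambda>J.
       return_pmf (s + hds H w z J))))"

definition d0_dist :: "(nat \<Rightarrow> real^'d \<Rightarrow> real^'d^'d) \<Rightarrow> nat set pmf \<Rightarrow> real^'d \<Rightarrow> nat \<Rightarrow> (real^'d) pmf" where
  "d0_dist H Jd w m = map_pmf (\<lambda>s. (1 / real m) *\<^sub>R s) (d0_sum H Jd w m)"

definition sarah_step ::
  "nat \<Rightarrow> (nat \<Rightarrow> real^'d \<Rightarrow> real^'d) \<Rightarrow> (nat \<Rightarrow> real^'d \<Rightarrow> real^'d^'d) \<Rightarrow> nat set pmf
   \<Rightarrow> real \<Rightarrow> real \<Rightarrow> real \<Rightarrow> real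
   \<Rightarrow> (real^'d) \<times> (real^'d) \<times> (real^'d) \<Rightarrow> ((real^'d) \<times> (real^'d) \<times> (real^'d)) pmf" where
  "sarah_step n g H Jd \<eta> \<alpha> \<beta> p s =
     (case s of (w, v, D) \<Rightarrow>
       (let w' = sarah_w \<eta> \<alpha> w v D in
        bind_pmf (pmf_of_set {..<n}) (\<lambda>i.
        bind_pmf (bernoulli_pmf p) (\<lambda>c.
        bind_pmf rademacher (\<lambda>z.
        bind_pmf Jd (\<lambda>J.
        return_pmf (w',
                    if c then gradP n g w' else v + g i w' - g i w,
                    \<beta> *\<^sub>R D + (1 - \<beta>) *\<^sub>R hds H w' z J)))))))"

primrec sarah_dist ::
  "nat \<Rightarrow> (nat \<Rightarrow> real^'d \<Rightarrow> real^'d) \<Rightarrow> (nat \<Rightarrow> real^'d \<Rightarrow> real^'d^'d) \<Rightarrow> nat set pmf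
   \<Rightarrow> real^'d \<Rightarrow> nat \<Rightarrow> real \<Rightarrow> real \<Rightarrow> real \<Rightarrow> real \<Rightarrow> nat
   \<Rightarrow> ((real^'d) \<times> (real^'d) \<times> (real^'d)) pmf" where
  "sarah_dist n g H Jd w0 m \<eta> \<alpha> \<beta> p 0 =
     map_pmf (\<lambda>D. (w0, gradP n g w0, D)) (d0_dist H Jd w0 m)"
| "sarah_dist n g H Jd w0 m \<eta> \<alpha> \<beta> p (Suc t) =
     bind_pmf (sarah_dist n g H Jd w0 m \<eta> \<alpha> \<beta> p t) (sarah_step n g H Jd \<eta> \<alpha> \<beta> p)"

end

theory Submission imports Defs begin

text \<open>Conditioned on the state (w, v, D), the new estimator error is 0 with probability p and
  otherwise e + a_i - abar for a uniform index i, where e = v - grad P(w),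
  a_i = grad f_i(w') - grad f_i(w) and abar = grad P(w') - grad P(w) is the mean of the a_i.
  Because the a_i are centred at abar the cross term vanishes, so the conditional mean square is
  at most |e|^2 + L^2 |w' - w|^2, and alpha |x|^2 \<le> |x|^2_hatD since every diagonal entry of
  hatD is at least alpha. All distributions involved have finite support, so every expectation
  is a finite sum and integrability is automatic.\<close>

lemma finite_set_pmf_rademacher: "finite (set_pmf (rademacher :: (real^'d) pmf))"
proof -
  let ?S = "{z::real^'d. \<forall>i. z $ i = 1 \<or> z $ i = -1}"
  have "?S \<subseteq> range (\<lambda>f::'d \<Rightarrow> bool. \<chi> i. if f i then 1 else -1)"
  proof
    fix z assume "z \<in> ?S"
    then have "z = (\<chi> i. if z $ i = 1 then 1 else -1)" by (auto simp: vec_eq_iff)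
    then show "z \<in> range (\<lambda>f::'d \<Rightarrow> bool. \<chi> i. if f i then 1 else -1)"
      by (rule range_eqI[where x = "\<lambda>i. z $ i = 1"])
  qed
  then have "finite ?S" by (rule finite_subset) simp
  moreover have "(1::real^'d) \<in> ?S" by simp
  ultimately show ?thesis unfolding rademacher_def by (subst set_pmf_of_set) blast+
qed

lemma finite_set_pmf_d0_sum:
  "finite (set_pmf Jd) \<Longrightarrow> finite (set_pmf (d0_sum H Jd w k))"
  by (induction k) (auto simp: finite_set_pmf_rademacher)

lemma finite_set_pmf_sarah_step:
  assumes "finite (set_pmf Jd)" "n \<ge> 1"
  shows "finite (set_pmf (sarah_step n g H Jd \<eta> \<alpha> \<beta> p s))"
proof -
  have "finite (set_pmf (bernoulli_pmf p))" by (rule finite_subset[OF subset_UNIV]) simp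
  moreover have "finite (set_pmf (pmf_of_set {..<n}))"
    using \<open>n \<ge> 1\<close> by (simp add: lessThan_empty_iff)
  ultimately show ?thesis
    using assms(1) unfolding sarah_step_def
    by (cases s) (auto simp: finite_set_pmf_rademacher Let_def)
qed

lemma finite_set_pmf_sarah_dist:
  assumes "finite (set_pmf Jd)" "n \<ge> 1"
  shows "finite (set_pmf (sarah_dist n g H Jd w0 m \<eta> \<alpha> \<beta> p t))"
  using assms
  by (induction t) (auto simp: finite_set_pmf_sarah_step d0_dist_def finite_set_pmf_d0_sum)

lemma expectation_bind_pmf_finite:
  fixes h :: "'b \<Rightarrow> real"
  assumes "finite (set_pmf M)" "\<And>x. x \<in> set_pmf M \<Longrightarrow> finite (set_pmf (N x))"
  shows "measure_pmf.expectation (M \<bind> N) h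
           = measure_pmf.expectation M (\<lambda>x. measure_pmf.expectation (N x) h)"
  using assms
  by (subst pmf_expectation_bind[of "set_pmf M"]) (auto simp: integral_measure_pmf[of "set_pmf M"])

lemma expectation_sarah_step_error:
  fixes w v D :: "real^'d" and \<eta> \<alpha> :: real
  assumes "finite (set_pmf Jd)" "n \<ge> 1" "0 \<le> p" "p \<le> 1"
  defines "w' \<equiv> sarah_w \<eta> \<alpha> w v D"
  shows "measure_pmf.expectation (sarah_step n g H Jd \<eta> \<alpha> \<beta> p (w, v, D))
           (\<lambda>(w, v, D). (norm (v - gradP n g w))\<^sup>2)
         = (1 - p) * (\<Sum>i<n. (norm (v + g i w' - g i w - gradP n g w'))\<^sup>2) / n"
  using assms unfolding sarah_step_def Let_def
  by (simp add: expectation_bind_pmf_finite finite_set_pmf_rademacher lessThan_empty_iff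
      integral_pmf_of_set)

lemma sum_power2_norm_add_centered:
  fixes e abar :: "'a::real_inner" and a :: "'i \<Rightarrow> 'a"
  assumes "(\<Sum>i\<in>I. a i) = real (card I) *\<^sub>R abar"
  shows "(\<Sum>i\<in>I. (norm (e + a i - abar))\<^sup>2)
           = real (card I) * ((norm e)\<^sup>2 - (norm abar)\<^sup>2) + (\<Sum>i\<in>I. (norm (a i))\<^sup>2)"
proof -
  define b where "b = e - abar"
  have "(\<Sum>i\<in>I. (norm (e + a i - abar))\<^sup>2) = (\<Sum>i\<in>I. (norm b)\<^sup>2 + 2 * (b \<bullet> a i) + (norm (a i))\<^sup>2)"
    by (rule sum.cong) (auto simp: b_def power2_norm_eq_inner algebra_simps inner_commute)
  also have "\<dots> = real (card I) * (norm b)\<^sup>2 + 2 * (b \<bullet> (\<Sum>i\<in>I. a i)) + (\<Sum>i\<in>I. (norm (a i))\<^sup>2)"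
    by (simp add: sum.distrib inner_sum_right sum_distrib_left)
  also have "\<dots> = real (card I) * ((norm b)\<^sup>2 + 2 * (b \<bullet> abar)) + (\<Sum>i\<in>I. (norm (a i))\<^sup>2)"
    by (simp add: assms algebra_simps)
  also have "(norm b)\<^sup>2 + 2 * (b \<bullet> abar) = (norm e)\<^sup>2 - (norm abar)\<^sup>2"
    by (simp add: b_def power2_norm_eq_inner algebra_simps inner_commute)
  finally show ?thesis .
qed

lemma mean_power2_norm_add_centered_le:
  fixes e abar :: "'a::real_inner" and a :: "'i \<Rightarrow> 'a"
  assumes "finite I" "I \<noteq> {}" "(\<Sum>i\<in>I. a i) = real (card I) *\<^sub>R abar"
    and "\<And>i. i \<in> I \<Longrightarrow> (norm (a i))\<^sup>2 \<le> \<delta>"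
  shows "(\<Sum>i\<in>I. (norm (e + a i - abar))\<^sup>2) / card I \<le> (norm e)\<^sup>2 + \<delta>"
proof -
  have "(\<Sum>i\<in>I. (norm (a i))\<^sup>2) \<le> real (card I) * \<delta>"
    using sum_mono[of I "\<lambda>i. (norm (a i))\<^sup>2" "\<lambda>_. \<delta>"] assms(4) by simp
  moreover have "0 \<le> real (card I) * (norm abar)\<^sup>2" by simp
  ultimately have "(\<Sum>i\<in>I. (norm (e + a i - abar))\<^sup>2) \<le> real (card I) * ((norm e)\<^sup>2 + \<delta>)"
    unfolding sum_power2_norm_add_centered[OF assms(3)] distrib_left right_diff_distrib
    by linarith
  moreover have "card I > 0" using assms(1,2) by (simp add: card_gt_0_iff)
  ultimately show ?thesis by (simp add: pos_divide_le_eq mult.commute)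
qed

lemma power2_norm_le_dnorm2_dhat: "\<alpha> * (norm (x::real^'d))\<^sup>2 \<le> dnorm2 (dhat \<alpha> D) x"
proof -
  have "\<alpha> * (norm x)\<^sup>2 = (\<Sum>i\<in>UNIV. \<alpha> * (x $ i)\<^sup>2)"
    unfolding power2_norm_eq_inner inner_vec_def by (simp add: sum_distrib_left power2_eq_square)
  also have "\<dots> \<le> dnorm2 (dhat \<alpha> D) x"
    unfolding dnorm2_def dhat_def by (rule sum_mono) (auto intro: mult_right_mono)
  finally show ?thesis .
qed

lemma sum_diff_eq_gradP_diff: "(\<Sum>i<n. g i x - g i y) = real n *\<^sub>R (gradP n g x - gradP n g y)"
  by (cases "n = 0") (simp_all add: gradP_def sum_subtractf scaleR_diff_right)

lemma sarah_step_error_le: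
  assumes "finite (set_pmf Jd)" "n \<ge> 1" "\<alpha> > 0" "0 \<le> p" "p \<le> 1"
    and lip: "\<And>i x y. i < n \<Longrightarrow> norm (g i x - g i y) \<le> L * norm (x - y)"
  shows "measure_pmf.expectation (sarah_step n g H Jd \<eta> \<alpha> \<beta> p (w, v, D))
           (\<lambda>(w, v, D). (norm (v - gradP n g w))\<^sup>2)
         \<le> (1 - p) * (norm (v - gradP n g w))\<^sup>2
           + (1 - p) * L\<^sup>2 / \<alpha> * dnorm2 (dhat \<alpha> D) (sarah_w \<eta> \<alpha> w v D - w)"
proof -
  define w' where "w' = sarah_w \<eta> \<alpha> w v D"
  define e where "e = v - gradP n g w"
  define a where "a i = g i w' - g i w" for i
  define abar where "abar = gradP n g w' - gradP n g w"
  define \<delta> where "\<delta> = L\<^sup>2 / \<alpha> * dnorm2 (dhat \<alpha> D) (w' - w)"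
  have "L\<^sup>2 * (norm (w' - w))\<^sup>2 \<le> \<delta>"
    using mult_left_mono[OF power2_norm_le_dnorm2_dhat[of \<alpha> "w' - w" D], of "L\<^sup>2"] \<open>\<alpha> > 0\<close>
    by (simp add: \<delta>_def field_simps)
  moreover have "(norm (a i))\<^sup>2 \<le> L\<^sup>2 * (norm (w' - w))\<^sup>2" if "i < n" for i
    using power_mono[OF lip[OF that, of w' w] norm_ge_zero, of 2]
    by (simp add: a_def power_mult_distrib)
  ultimately have mean_le: "(\<Sum>i<n. (norm (e + a i - abar))\<^sup>2) / n \<le> (norm e)\<^sup>2 + \<delta>"
    using mean_power2_norm_add_centered_le[of "{..<n}" a abar \<delta> e] \<open>n \<ge> 1\<close>
    by (force simp: a_def abar_def sum_diff_eq_gradP_diff)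
  have estimator_error: "v + g i w' - g i w - gradP n g w' = e + a i - abar" for i
    by (simp add: e_def a_def abar_def algebra_simps)
  have "measure_pmf.expectation (sarah_step n g H Jd \<eta> \<alpha> \<beta> p (w, v, D))
          (\<lambda>(w, v, D). (norm (v - gradP n g w))\<^sup>2)
        = (1 - p) * (\<Sum>i<n. (norm (v + g i w' - g i w - gradP n g w'))\<^sup>2) / n"
    unfolding w'_def using assms(1,2,4,5) by (rule expectation_sarah_step_error)
  also have "\<dots> = (1 - p) * ((\<Sum>i<n. (norm (e + a i - abar))\<^sup>2) / n)"
    by (simp only: estimator_error times_divide_eq_right)
  also have "\<dots> \<le> (1 - p) * ((norm e)\<^sup>2 + \<delta>)"
    using mean_le \<open>p \<le> 1\<close> by (intro mult_left_mono) auto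
  also have "\<dots> = (1 - p) * (norm (v - gradP n g w))\<^sup>2
                  + (1 - p) * L\<^sup>2 / \<alpha> * dnorm2 (dhat \<alpha> D) (sarah_w \<eta> \<alpha> w v D - w)"
    unfolding e_def \<delta>_def w'_def by (simp add: distrib_left)
  finally show ?thesis .
qed

theorem lemma4:
  fixes f :: "nat \<Rightarrow> real^'d \<Rightarrow> real"
    and g :: "nat \<Rightarrow> real^'d \<Rightarrow> real^'d"
    and H :: "nat \<Rightarrow> real^'d \<Rightarrow> real^'d^'d"
    and Jd :: "nat set pmf"
    and w0 :: "real^'d"
    and n m t :: nat and L \<eta> \<alpha> \<beta> p :: real
  assumes n: "n \<ge> 1"
    and alpha: "\<alpha> > 0" and beta: "0 < \<beta>" "\<beta> < 1" and m: "m \<ge> 1" and eta: "\<eta> > 0"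
    and p: "0 < p" "p \<le> 1"
    and grad: "\<And>i w. i < n \<Longrightarrow> (f i has_derivative (\<lambda>h. g i w \<bullet> h)) (at w)"
    and hess: "\<And>i w. i < n \<Longrightarrow> (g i has_derivative (\<lambda>h. H i w *v h)) (at w)"
    and lip: "\<And>i x y. i < n \<Longrightarrow> norm (g i x - g i y) \<le> L * norm (x - y)"
    and lipP: "\<And>x y. norm (gradP n g x - gradP n g y) \<le> L * norm (x - y)"
    and Jd: "\<And>J. J \<in> set_pmf Jd \<Longrightarrow> J \<noteq> {} \<and> J \<subseteq> {..<n}"
  shows "measure_pmf.expectation (sarah_dist n g H Jd w0 m \<eta> \<alpha> \<beta> p (Suc t))
            (\<lambda>(w, v, D). (norm (v - gradP n g w))\<^sup>2)
         \<le> (1 - p) * measure_pmf.expectation (sarah_dist n g H Jd w0 m \<eta> \<alpha> \<beta> p t)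
                 (\<lambda>(w, v, D). (norm (v - gradP n g w))\<^sup>2)
           + (1 - p) * L\<^sup>2 / \<alpha> * measure_pmf.expectation (sarah_dist n g H Jd w0 m \<eta> \<alpha> \<beta> p t)
                 (\<lambda>(w, v, D). dnorm2 (dhat \<alpha> D) (sarah_w \<eta> \<alpha> w v D - w))"
proof -
  let ?Q = "sarah_dist n g H Jd w0 m \<eta> \<alpha> \<beta> p t"
  let ?F = "\<lambda>(w::real^'d, v::real^'d, D::real^'d). (norm (v - gradP n g w))\<^sup>2"
  let ?G = "\<lambda>(w, v, D). dnorm2 (dhat \<alpha> D) (sarah_w \<eta> \<alpha> w v D - w)"
  have finJ: "finite (set_pmf Jd)" by (rule finite_subset[of _ "Pow {..<n}"]) (use Jd in auto)
  have finQ: "finite (set_pmf ?Q)" using finite_set_pmf_sarah_dist[OF finJ n] .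
  have "measure_pmf.expectation (sarah_dist n g H Jd w0 m \<eta> \<alpha> \<beta> p (Suc t)) ?F
      = measure_pmf.expectation ?Q (\<lambda>s. measure_pmf.expectation (sarah_step n g H Jd \<eta> \<alpha> \<beta> p s) ?F)"
    using finQ by (simp add: expectation_bind_pmf_finite finite_set_pmf_sarah_step[OF finJ n])
  also have "\<dots> \<le> measure_pmf.expectation ?Q (\<lambda>s. (1 - p) * ?F s + (1 - p) * L\<^sup>2 / \<alpha> * ?G s)"
    using sarah_step_error_le[OF finJ n alpha less_imp_le[OF p(1)] p(2) lip]
    by (intro integral_mono integrable_measure_pmf_finite[OF finQ]) auto
  also have "\<dots> = (1 - p) * measure_pmf.expectation ?Q ?F
                  + (1 - p) * L\<^sup>2 / \<alpha> * measure_pmf.expectation ?Q ?G"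
    by (simp add: integrable_measure_pmf_finite[OF finQ])
  finally show ?thesis .
qed

end
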